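(* Let $\mathcal V$ be a finite set, $2\le k\le|\mathcal V|-2$, let $\Gamma\subset\binom{\mathcal V}{k}$ be a code such that $G:={\rm Aut}(\Gamma)\cap{\rm Sym}(\mathcal V)$ is transitive on $\mathcal V$. Then for $u\in\mathcal V$ the set $\Delta(u)=\bigcap\{\gamma'\in\Gamma : u\in\gamma'\}$ is a block of imprimitivity for $G$ in $\mathcal V$. In particular, if $G$ is primitive on $\mathcal V$, then $\Delta(u)=\{u\}$.
   Context: A code is a proper non-empty subset $\Gamma$ of $\binom{\mathcal V}{k}$, the set of $k$-subsets of $\mathcal V$ (vertex set of the Johnson graph $J(|\mathcal V|,k)$, adjacency meaning intersection of size $k-1$). ${\rm Aut}(\Gamma)$ is the setwise stabiliser of $\Gamma$ in the automorphism group of the Johnson graph. *)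

theory Defs
  imports "HOL-Combinatorics.Permutations"
begin

definition ksubsets :: "'a set \<Rightarrow> nat \<Rightarrow> 'a set set" where
  "ksubsets V k = {S. S \<subseteq> V \<and> card S = k}"

definition is_code :: "'a set \<Rightarrow> nat \<Rightarrow> 'a set set \<Rightarrow> bool" where
  "is_code V k \<Gamma> \<longleftrightarrow> \<Gamma> \<subseteq> ksubsets V k \<and> \<Gamma> \<noteq> {} \<and> \<Gamma> \<noteq> ksubsets V k"

definition code_sym_aut :: "'a set \<Rightarrow> 'a set set \<Rightarrow> ('a \<Rightarrow> 'a) set" where
  "code_sym_aut V \<Gamma> = {g. g permutes V \<and> (\<lambda>\<gamma>. g ` \<gamma>) ` \<Gamma> = \<Gamma>}"

definition transitive_on :: "('a \<Rightarrow> 'a) set \<Rightarrow> 'a set \<Rightarrow> bool" where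
  "transitive_on G V \<longleftrightarrow> (\<forall>u\<in>V. \<forall>v\<in>V. \<exists>g\<in>G. g u = v)"

definition is_block :: "('a \<Rightarrow> 'a) set \<Rightarrow> 'a set \<Rightarrow> 'a set \<Rightarrow> bool" where
  "is_block G V B \<longleftrightarrow> B \<subseteq> V \<and> B \<noteq> {} \<and> (\<forall>g\<in>G. g ` B = B \<or> g ` B \<inter> B = {})"

definition primitive_on :: "('a \<Rightarrow> 'a) set \<Rightarrow> 'a set \<Rightarrow> bool" where
  "primitive_on G V \<longleftrightarrow> transitive_on G V \<and>
     (\<forall>B. is_block G V B \<longrightarrow> B = V \<or> (\<exists>x. B = {x}))"

definition Delta :: "'a set set \<Rightarrow> 'a \<Rightarrow> 'a set" where
  "Delta \<Gamma> u = \<Inter> {\<gamma>\<in>\<Gamma>. u \<in> \<gamma>}"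

end

theory Submission
  imports Defs
begin

text \<open>Every automorphism of \<open>\<Gamma>\<close> maps the codewords through \<open>u\<close> onto the codewords through
  its image, so \<open>u \<mapsto> Delta \<Gamma> u\<close> is equivariant. Transitivity then forces all the sets
  \<open>Delta \<Gamma> u\<close> to have the same size; since \<open>w \<in> Delta \<Gamma> u\<close> implies
  \<open>Delta \<Gamma> w \<subseteq> Delta \<Gamma> u\<close>, the sets \<open>Delta \<Gamma> u\<close> partition \<open>V\<close>, and an equivariant
  partition consists of blocks. A block of a primitive group is a singleton or all of \<open>V\<close>,
  and \<open>Delta \<Gamma> u\<close> lies inside a codeword of size \<open>k < |V|\<close>.\<close>

lemma self_in_Delta: "u \<in> Delta \<Gamma> u"
  by (auto simp: Delta_def)

lemma Delta_subset_codeword: "\<gamma> \<in> \<Gamma> \<Longrightarrow> u \<in> \<gamma> \<Longrightarrow> Delta \<Gamma> u \<subseteq> \<gamma>"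
  by (auto simp: Delta_def)

lemma Delta_subset_Delta_if_mem: "w \<in> Delta \<Gamma> u \<Longrightarrow> Delta \<Gamma> w \<subseteq> Delta \<Gamma> u"
  by (auto simp: Delta_def)

lemma Delta_image:
  assumes "bij g" and stab: "(\<lambda>\<gamma>. g ` \<gamma>) ` \<Gamma> = \<Gamma>"
  shows "g ` Delta \<Gamma> u = Delta \<Gamma> (g u)"
proof -
  have through_gu: "{\<gamma>\<in>\<Gamma>. g u \<in> \<gamma>} = (\<lambda>\<gamma>. g ` \<gamma>) ` {\<gamma>\<in>\<Gamma>. u \<in> \<gamma>}"
  proof (intro equalityI subsetI)
    fix \<gamma> assume "\<gamma> \<in> {\<gamma>\<in>\<Gamma>. g u \<in> \<gamma>}"
    then obtain \<gamma>' where "\<gamma>' \<in> \<Gamma>" "\<gamma> = g ` \<gamma>'" "g u \<in> g ` \<gamma>'"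
      using stab by blast
    then show "\<gamma> \<in> (\<lambda>\<gamma>. g ` \<gamma>) ` {\<gamma>\<in>\<Gamma>. u \<in> \<gamma>}"
      using bij_is_inj[OF \<open>bij g\<close>] by (auto simp: inj_image_mem_iff)
  next
    fix \<gamma> assume "\<gamma> \<in> (\<lambda>\<gamma>. g ` \<gamma>) ` {\<gamma>\<in>\<Gamma>. u \<in> \<gamma>}"
    then show "\<gamma> \<in> {\<gamma>\<in>\<Gamma>. g u \<in> \<gamma>}"
      using stab by blast
  qed
  have "g ` \<Inter> {\<gamma>\<in>\<Gamma>. u \<in> \<gamma>} = \<Inter> ((\<lambda>\<gamma>. g ` \<gamma>) ` {\<gamma>\<in>\<Gamma>. u \<in> \<gamma>})"
    using bij_image_INT[OF \<open>bij g\<close>, of id] by simp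
  then show ?thesis
    by (simp add: Delta_def through_gu)
qed

lemma code_sym_aut_bij: "g \<in> code_sym_aut V \<Gamma> \<Longrightarrow> bij g"
  by (auto simp: code_sym_aut_def permutes_bij)

lemma code_sym_aut_Delta_image: "g \<in> code_sym_aut V \<Gamma> \<Longrightarrow> g ` Delta \<Gamma> u = Delta \<Gamma> (g u)"
  by (rule Delta_image[OF code_sym_aut_bij]) (auto simp: code_sym_aut_def)

lemma codeword_in_ksubsets:
  assumes "is_code V k \<Gamma>" "\<gamma> \<in> \<Gamma>"
  shows "\<gamma> \<subseteq> V" "card \<gamma> = k"
  using assms unfolding is_code_def ksubsets_def by blast+

lemma code_covers_points:
  assumes code: "is_code V k \<Gamma>" and "k \<noteq> 0" and trans: "transitive_on (code_sym_aut V \<Gamma>) V"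
    and "u \<in> V"
  obtains \<gamma> where "\<gamma> \<in> \<Gamma>" "u \<in> \<gamma>"
proof -
  obtain \<gamma>0 where "\<gamma>0 \<in> \<Gamma>"
    using code by (auto simp: is_code_def)
  then have \<gamma>0: "\<gamma>0 \<in> \<Gamma>" "\<gamma>0 \<subseteq> V" "card \<gamma>0 = k"
    using codeword_in_ksubsets[OF code] by auto
  then have "\<gamma>0 \<noteq> {}"
    using \<open>k \<noteq> 0\<close> by auto
  then obtain x where x: "x \<in> \<gamma>0"
    by blast
  then obtain g where g: "g \<in> code_sym_aut V \<Gamma>" "g x = u"
    using trans \<gamma>0(2) \<open>u \<in> V\<close> unfolding transitive_on_def by blast
  then have "g ` \<gamma>0 \<in> \<Gamma>"
    using \<gamma>0(1) by (auto simp: code_sym_aut_def)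
  with g x show thesis
    using that by blast
qed

lemma card_Delta_eq:
  assumes "transitive_on (code_sym_aut V \<Gamma>) V" "u \<in> V" "w \<in> V"
  shows "card (Delta \<Gamma> w) = card (Delta \<Gamma> u)"
proof -
  obtain g where g: "g \<in> code_sym_aut V \<Gamma>" "g u = w"
    using assms unfolding transitive_on_def by meson
  then have "Delta \<Gamma> w = g ` Delta \<Gamma> u"
    by (simp add: code_sym_aut_Delta_image)
  then show ?thesis
    using card_image[OF inj_on_subset[OF bij_is_inj[OF code_sym_aut_bij[OF g(1)]] subset_UNIV]]
    by simp
qed

context
  fixes V :: "'a set" and k :: nat and \<Gamma> :: "'a set set"
  assumes fin: "finite V" and "k \<noteq> 0" and code: "is_code V k \<Gamma>"
    and trans: "transitive_on (code_sym_aut V \<Gamma>) V"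
begin

private lemma Delta_in_points:
  assumes "u \<in> V"
  shows "Delta \<Gamma> u \<subseteq> V"
proof -
  obtain \<gamma> where \<gamma>: "\<gamma> \<in> \<Gamma>" "u \<in> \<gamma>"
    using code_covers_points[OF code \<open>k \<noteq> 0\<close> trans assms] .
  show ?thesis
    using Delta_subset_codeword[OF \<gamma>] codeword_in_ksubsets(1)[OF code \<gamma>(1)] by (rule subset_trans)
qed

lemma Delta_eq_if_mem:
  assumes "u \<in> V" "w \<in> Delta \<Gamma> u"
  shows "Delta \<Gamma> w = Delta \<Gamma> u"
proof (rule card_subset_eq)
  show "finite (Delta \<Gamma> u)"
    using Delta_in_points[OF \<open>u \<in> V\<close>] fin by (rule finite_subset)
  show "Delta \<Gamma> w \<subseteq> Delta \<Gamma> u"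
    using \<open>w \<in> Delta \<Gamma> u\<close> by (rule Delta_subset_Delta_if_mem)
  show "card (Delta \<Gamma> w) = card (Delta \<Gamma> u)"
    using card_Delta_eq[OF trans \<open>u \<in> V\<close>] Delta_in_points[OF \<open>u \<in> V\<close>] assms(2) by blast
qed

lemma Delta_is_block:
  assumes "u \<in> V"
  shows "is_block (code_sym_aut V \<Gamma>) V (Delta \<Gamma> u)"
  unfolding is_block_def
proof (intro conjI ballI)
  show "Delta \<Gamma> u \<subseteq> V" "Delta \<Gamma> u \<noteq> {}"
    using Delta_in_points[OF assms] self_in_Delta[of u \<Gamma>] by auto
  fix g assume g: "g \<in> code_sym_aut V \<Gamma>"
  have "g u \<in> V"
    using g assms by (auto simp: code_sym_aut_def permutes_in_image)
  show "g ` Delta \<Gamma> u = Delta \<Gamma> u \<or> g ` Delta \<Gamma> u \<inter> Delta \<Gamma> u = {}"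
  proof (rule disjCI)
    assume "g ` Delta \<Gamma> u \<inter> Delta \<Gamma> u \<noteq> {}"
    then obtain w where "w \<in> Delta \<Gamma> (g u)" "w \<in> Delta \<Gamma> u"
      using code_sym_aut_Delta_image[OF g] by auto
    then have "Delta \<Gamma> (g u) = Delta \<Gamma> u"
      using Delta_eq_if_mem \<open>g u \<in> V\<close> assms by metis
    then show "g ` Delta \<Gamma> u = Delta \<Gamma> u"
      by (simp add: code_sym_aut_Delta_image[OF g])
  qed
qed

lemma Delta_neq_points:
  assumes "k < card V" "u \<in> V"
  shows "Delta \<Gamma> u \<noteq> V"
proof
  assume Delta_V: "Delta \<Gamma> u = V"
  obtain \<gamma> where "\<gamma> \<in> \<Gamma>" "u \<in> \<gamma>"
    using code_covers_points[OF code \<open>k \<noteq> 0\<close> trans \<open>u \<in> V\<close>] .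
  then have "V \<subseteq> \<gamma>" "card \<gamma> = k" "\<gamma> \<subseteq> V"
    using Delta_subset_codeword[of \<gamma> \<Gamma> u] Delta_V codeword_in_ksubsets[OF code] by auto
  then show False
    using \<open>k < card V\<close> by auto
qed

end

theorem lemma5p1:
  fixes V :: "'a set" and k :: nat and \<Gamma> :: "'a set set"
  assumes "finite V"
    and "2 \<le> k" and "k + 2 \<le> card V"
    and "is_code V k \<Gamma>"
    and "transitive_on (code_sym_aut V \<Gamma>) V"
  shows "(\<forall>u\<in>V. is_block (code_sym_aut V \<Gamma>) V (Delta \<Gamma> u))
    \<and> (primitive_on (code_sym_aut V \<Gamma>) V \<longrightarrow> (\<forall>u\<in>V. Delta \<Gamma> u = {u}))"
proof -
  have "k \<noteq> 0" "k < card V"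
    using assms(2,3) by auto
  note block = Delta_is_block[OF assms(1) \<open>k \<noteq> 0\<close> assms(4,5)]
  note proper = Delta_neq_points[OF assms(1) \<open>k \<noteq> 0\<close> assms(4,5) \<open>k < card V\<close>]
  have "Delta \<Gamma> u = {u}" if "primitive_on (code_sym_aut V \<Gamma>) V" "u \<in> V" for u
    using that block[of u] proper[of u] self_in_Delta[of u \<Gamma>]
    by (auto simp: primitive_on_def)
  with block show ?thesis
    by blast
qed

end
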